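(* Let $(G,\prec)$ be an ordered graph with vertices $a\prec b\prec c\prec d$ such that there is a crossing sequence from $a$ to $c$ and a crossing sequence from $b$ to $d$. Then there is a crossing sequence from $a$ to $d$.
   Context: An ordered graph is a pair $(G,\prec)$ where $G$ is a finite graph and $\prec$ a linear order on $V(G)$. For vertices $p\prec q\prec r\prec s$ with $pr,qs\in E(G)$, we say $pr$ crosses $qs$. For distinct vertices $u\prec v$, a crossing sequence from $u$ to $v$ is a sequence of distinct edges $e_1,\dots,e_k$ such that $u$ is the smaller end of $e_1$, $v$ is the larger end of $e_k$, and $e_i$ crosses $e_{i+1}$ for $1\le i<k$. *)

theory Defs
  imports Main
begin

text \<open>An ordered graph: finite vertex set V, edge set E of 2-element subsets of V,
  the linear order on V is the order of the linorder type 'a restricted to V.\<close>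

definition ordered_graph :: "'a::linorder set \<Rightarrow> 'a set set \<Rightarrow> bool" where
  "ordered_graph V E \<longleftrightarrow> finite V \<and> (\<forall>e\<in>E. e \<subseteq> V \<and> card e = 2)"

definition crosses :: "'a::linorder set \<Rightarrow> 'a set \<Rightarrow> bool" where
  "crosses e f \<longleftrightarrow> (\<exists>p q r s. p < q \<and> q < r \<and> r < s \<and> e = {p, r} \<and> f = {q, s})"

definition crossing_seq :: "'a::linorder set set \<Rightarrow> 'a set list \<Rightarrow> 'a \<Rightarrow> 'a \<Rightarrow> bool" where
  "crossing_seq E es u v \<longleftrightarrow> u < v \<and> es \<noteq> [] \<and> distinct es \<and> set es \<subseteq> E
     \<and> u = Min (hd es) \<and> v = Max (last es)
     \<and> (\<forall>i. Suc i < length es \<longrightarrow> crosses (es ! i) (es ! Suc i))"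

end

theory Submission
  imports Defs
begin

text \<open>Call a nonempty list of edges in which each edge crosses the next a crossing chain; it
  spans from the left end of its first edge to the right end of its last one, and along it both
  ends increase, so it is automatically a crossing sequence. Two chains whose spans overlap, the
  second starting strictly inside the first, merge into a chain from the start of the first to
  the farther of the two right ends. The edges of the second chain are absorbed one at a time:
  an edge g whose left end lies strictly inside the span of a chain either reaches no farther
  to the right, or it crosses the last edge of the chain whose left end is left of g's, and
  cutting the chain after that edge and appending g gives a chain reaching up to g's right
  end.\<close>

definition crossing_chain :: "'a::linorder set set \<Rightarrow> 'a set list \<Rightarrow> bool" where
  "crossing_chain E es \<longleftrightarrow> es \<noteq> [] \<and> set es \<subseteq> E \<and> successively crosses es"

lemma crossing_chain_Cons:
  "crossing_chain E (e # es) \<longleftrightarrow> e \<in> E \<and> (es = [] \<or> crosses e (hd es) \<and> crossing_chain E es)"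
  by (auto simp: crossing_chain_def successively_Cons)

lemma crossesD: "crosses e f \<Longrightarrow> Min e < Min f \<and> Min f < Max e \<and> Max e < Max f"
  unfolding crosses_def by auto

lemma two_elem_set_eq_Min_Max:
  fixes e :: "'a::linorder set"
  assumes "card e = 2"
  shows "e = {Min e, Max e}"
proof -
  obtain x y where "e = {x, y}" "x \<noteq> y"
    using assms card_2_iff by metis
  then show ?thesis
    by (cases "x < y") (auto simp: min_def max_def)
qed

lemma crossesI:
  assumes "card e = 2" "card f = 2" "Min e < Min f" "Min f < Max e" "Max e < Max f"
  shows "crosses e f"
  unfolding crosses_def
  using assms two_elem_set_eq_Min_Max[OF assms(1)] two_elem_set_eq_Min_Max[OF assms(2)] by blast

lemma successively_crosses_distinct:
  assumes "successively crosses es"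
  shows "distinct es"
proof -
  have "successively (<) (map Min es)"
    unfolding successively_map using assms by (rule successively_mono) (simp add: crossesD)
  then have "sorted_wrt (<) (map Min es)"
    by (simp add: successively_conv_sorted_wrt)
  then show ?thesis
    by (simp add: strict_sorted_iff distinct_map)
qed

lemma successively_crosses_Max_le_last:
  "successively crosses (e # es) \<Longrightarrow> Max e \<le> Max (last (e # es))"
proof (induction es arbitrary: e)
  case (Cons f es)
  then show ?case
    using crossesD[of e f] by fastforce
qed simp

lemma crossing_seq_iff_crossing_chain:
  "crossing_seq E es u v \<longleftrightarrow>
     u < v \<and> crossing_chain E es \<and> Min (hd es) = u \<and> Max (last es) = v"
  unfolding crossing_seq_def crossing_chain_def successively_conv_nth[symmetric]
  using successively_crosses_distinct by blast

lemma crossing_chain_extend: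
  assumes E2: "\<forall>x\<in>E. card x = 2"
    and "crossing_chain E H" "g \<in> E"
    and "Min (hd H) < Min g" "Min g < Max (last H)" "Max (last H) < Max g"
  shows "\<exists>H'. crossing_chain E H' \<and> hd H' = hd H \<and> last H' = g"
  using assms(2-)
proof (induction H)
  case (Cons e H)
  show ?case
  proof (cases "H \<noteq> [] \<and> Min (hd H) < Min g")
    case True
    then obtain H' where "crossing_chain E H'" "hd H' = hd H" "last H' = g"
      using Cons by (auto simp: crossing_chain_Cons)
    moreover have "H' \<noteq> []"
      using \<open>crossing_chain E H'\<close> by (simp add: crossing_chain_def)
    ultimately show ?thesis
      using Cons.prems True by (intro exI[of _ "e # H'"]) (auto simp: crossing_chain_Cons)
  next
    case False
    have "Min g < Max e"
    proof (cases "H = []")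
      case False
      then show ?thesis
        using \<open>\<not> (H \<noteq> [] \<and> Min (hd H) < Min g)\<close> Cons.prems(1)
        by (auto simp: crossing_chain_Cons dest: crossesD)
    qed (use Cons.prems in simp)
    moreover have "Max e < Max g"
      using successively_crosses_Max_le_last[of e H] Cons.prems(1,5)
      by (simp add: crossing_chain_def)
    ultimately have "crosses e g"
      using Cons.prems E2 by (intro crossesI) (auto simp: crossing_chain_Cons)
    then show ?thesis
      using Cons.prems by (intro exI[of _ "[e, g]"]) (auto simp: crossing_chain_Cons)
  qed
qed (simp add: crossing_chain_def)

lemma crossing_chain_absorb_edge:
  assumes "\<forall>x\<in>E. card x = 2"
    and "crossing_chain E H" "g \<in> E"
    and "Min (hd H) < Min g" "Min g < Max (last H)"
  shows "\<exists>H'. crossing_chain E H' \<and> Min (hd H') = Min (hd H)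
           \<and> Max (last H') = max (Max (last H)) (Max g)"
proof (cases "Max g \<le> Max (last H)")
  case True
  then show ?thesis
    using assms by (intro exI[of _ H]) simp
next
  case False
  then obtain H' where "crossing_chain E H'" "hd H' = hd H" "last H' = g"
    using crossing_chain_extend[OF assms] by (metis not_le)
  then show ?thesis
    using False by (intro exI[of _ H']) simp
qed

lemma crossing_chain_merge:
  assumes E2: "\<forall>x\<in>E. card x = 2"
    and "crossing_chain E G" "crossing_chain E H"
    and "Min (hd H) < Min (hd G)" "Min (hd G) < Max (last H)"
  shows "\<exists>H'. crossing_chain E H' \<and> Min (hd H') = Min (hd H)
           \<and> Max (last H') = max (Max (last H)) (Max (last G))"
  using assms(2-)
proof (induction G arbitrary: H)
  case (Cons g G)
  obtain H1 where H1: "crossing_chain E H1" "Min (hd H1) = Min (hd H)"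
      "Max (last H1) = max (Max (last H)) (Max g)"
    using crossing_chain_absorb_edge[OF E2 Cons.prems(2)] Cons.prems
    by (auto simp: crossing_chain_Cons)
  show ?case
  proof (cases "G = []")
    case True
    then show ?thesis
      using H1 by auto
  next
    case False
    then have "crosses g (hd G)" "crossing_chain E G"
      using Cons.prems(1) by (auto simp: crossing_chain_Cons)
    moreover have "Max g \<le> Max (last G)"
      using successively_crosses_Max_le_last[of g G] Cons.prems(1) False
      by (simp add: crossing_chain_def)
    ultimately show ?thesis
      using Cons.IH[OF _ H1(1)] H1 Cons.prems(3)
      by (fastforce dest: crossesD simp: max_def)
  qed
qed (simp add: crossing_chain_def)

theorem lemma3p1:
  fixes V :: "'a::linorder set" and E :: "'a set set" and a b c d :: 'a
  assumes "ordered_graph V E"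
    and "a \<in> V" "b \<in> V" "c \<in> V" "d \<in> V"
    and "a < b" "b < c" "c < d"
    and "\<exists>es. crossing_seq E es a c"
    and "\<exists>es. crossing_seq E es b d"
  shows "\<exists>es. crossing_seq E es a d"
proof -
  have E2: "\<forall>x\<in>E. card x = 2"
    using assms(1) unfolding ordered_graph_def by auto
  obtain H G where "crossing_seq E H a c" "crossing_seq E G b d"
    using assms(9,10) by blast
  then obtain H' where "crossing_chain E H'" "Min (hd H') = a" "Max (last H') = d"
    using crossing_chain_merge[OF E2, of G H] assms(6-8)
    by (auto simp: crossing_seq_iff_crossing_chain)
  then show ?thesis
    using assms(6-8) by (auto simp: crossing_seq_iff_crossing_chain)
qed

end
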